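(* Let $(G,H,\mathcal{L})$ be a cut-and-project scheme, let $U\subseteq H$ be non-empty open and $W\subseteq H$ compact with $U\subseteq W$, and let $\Gamma\subseteq G$ satisfy $\Lambda_U\subseteq\Gamma\subseteq\Lambda_W$. Let $(s_\alpha)$ be a net in $G$ such that $(s_\alpha+\Gamma)$ converges vaguely to some point set $\Gamma'\subseteq G$ and such that $((-s_\alpha,0)+\mathcal{L})$ converges in $(G\times H)/\mathcal{L}$ to some $(s,t)+\mathcal{L}$. Then $\Lambda_{U+t}\subseteq s+\Gamma'\subseteq\Lambda_{W+t}$.
   Context: A cut-and-project scheme $(G,H,\mathcal{L})$ consists of locally compact abelian groups $G,H$ and a discrete cocompact subgroup $\mathcal{L}\subseteq G\times H$ such that $\pi^G|_{\mathcal{L}}$ is injective and $\pi^H(\mathcal{L})$ is dense in $H$. For $W\subseteq H$, $\Lambda_W=\pi^G(\mathcal{L}\cap(G\times W))$. Point sets are identified with their Dirac combs $\sum_{g\in\Lambda}\delta_g$, and convergence of point sets is vague convergence of these measures. $(G\times H)/\mathcal L$ carries the quotient topology. *)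

theory Defs
  imports "HOL-Analysis.Analysis"
begin

definition coset_of :: "'a::ab_group_add set \<Rightarrow> 'a \<Rightarrow> 'a set" where
  "coset_of L x = (\<lambda>l. x + l) ` L"

definition quotient_top :: "'a::{ab_group_add,topological_space} set \<Rightarrow> 'a set topology" where
  "quotient_top L = topology (\<lambda>S. S \<subseteq> range (coset_of L) \<and> open {x. coset_of L x \<in> S})"

definition cut_and_project ::
  "('g::{topological_ab_group_add,t2_space} \<times> 'h::{topological_ab_group_add,t2_space}) set \<Rightarrow> bool" where
  "cut_and_project L \<longleftrightarrow>
     locally_compact_space (euclidean :: 'g topology) \<and>
     locally_compact_space (euclidean :: 'h topology) \<and>
     0 \<in> L \<and> (\<forall>x\<in>L. \<forall>y\<in>L. x + y \<in> L \<and> - x \<in> L) \<and>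
     (\<forall>x\<in>L. \<exists>V. open V \<and> V \<inter> L = {x}) \<and>
     compactin (quotient_top L) (topspace (quotient_top L)) \<and>
     inj_on fst L \<and>
     closure (snd ` L) = UNIV"

definition model_set ::
  "('g \<times> 'h) set \<Rightarrow> 'h set \<Rightarrow> 'g set" where
  "model_set L W = fst ` (L \<inter> (UNIV \<times> W))"

definition point_set :: "'g::topological_space set \<Rightarrow> bool" where
  "point_set \<Lambda> \<longleftrightarrow> (\<forall>K. compact K \<longrightarrow> finite (\<Lambda> \<inter> K))"

definition Cc :: "('g::topological_space \<Rightarrow> complex) set" where
  "Cc = {f. continuous_on UNIV f \<and> compact (closure {x. f x \<noteq> 0})}"

text \<open>Integral of f against the Dirac comb of \<Lambda>.\<close>
definition comb_int :: "'g set \<Rightarrow> ('g \<Rightarrow> complex) \<Rightarrow> complex" where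
  "comb_int \<Lambda> f = (\<Sum>x\<in>{x\<in>\<Lambda>. f x \<noteq> 0}. f x)"

text \<open>Vague convergence of the Dirac combs of a net (given as a filter F) of point sets.\<close>
definition vague_conv :: "('i \<Rightarrow> 'g::topological_space set) \<Rightarrow> 'g set \<Rightarrow> 'i filter \<Rightarrow> bool" where
  "vague_conv \<Lambda>s \<Lambda> F \<longleftrightarrow> (\<forall>f\<in>Cc. ((\<lambda>a. comb_int (\<Lambda>s a) f) \<longlongrightarrow> comb_int \<Lambda> f) F)"

end

theory Submission
  imports Defs
begin

(* Convergence of (-s_a, 0) + L to (s, t) + L means that eventually some (p, q) close to (s, t)
   satisfies (p + s_a, q) \<in> L.  Subtracting this lattice point from a point (x, x') of L with
   x' \<in> U + t gives a point of \<Lambda>_U \<subseteq> \<Gamma>, so s_a + \<Gamma> eventually meets every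
   neighbourhood of x - s; testing the vague convergence against a nonnegative bump function
   at x - s forces x - s \<in> \<Gamma>'.  Conversely, for y \<in> \<Gamma>' every neighbourhood of y eventually
   meets s_a + \<Gamma>, and adding the lattice point to the corresponding point of \<Lambda>_W gives
   lattice points whose first coordinate is close to s + y and whose second coordinate is
   close to W + t.  As L is discrete and W compact, only finitely many lattice points are
   candidates, so s + y \<in> \<Lambda>_(W+t). *)

section \<open>Neighbourhoods in topological groups\<close>

instance prod :: (topological_monoid_add, topological_monoid_add) topological_monoid_add
proof
  fix a b :: "'a \<times> 'b"
  have "(fst \<longlongrightarrow> a) (nhds (a, b))" "(snd \<longlongrightarrow> b) (nhds (a, b))"
    using tendsto_fst[OF filterlim_ident[where F="nhds (a, b)"]]
      tendsto_snd[OF filterlim_ident[where F="nhds (a, b)"]]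
    by (simp_all add: fun_eq_iff)
  then have "((\<lambda>x. fst x + snd x) \<longlongrightarrow> a + b) (nhds (a, b))"
    unfolding plus_prod_def by (intro tendsto_intros)
  then show "LIM x (nhds a \<times>\<^sub>F nhds b). fst x + snd x :> nhds (a + b)"
    by (simp add: nhds_prod)
qed

instance prod :: (topological_group_add, topological_group_add) topological_group_add
proof
  fix a :: "'a \<times> 'b"
  show "(uminus \<longlongrightarrow> - a) (nhds a)"
    unfolding uminus_prod_def by (intro tendsto_intros filterlim_ident)
qed

instance prod :: (topological_ab_group_add, topological_ab_group_add) topological_ab_group_add ..

lemma add_nhds_elim:
  fixes a b :: "'a::topological_monoid_add"
  assumes "open A" "a + b \<in> A"
  obtains N M where "open N" "open M" "a \<in> N" "b \<in> M" "\<And>x y. x \<in> N \<Longrightarrow> y \<in> M \<Longrightarrow> x + y \<in> A"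
proof -
  have "open ((\<lambda>p. fst p + snd p) -` A)"
    using assms(1) by (intro open_vimage continuous_intros)
  moreover have "(a, b) \<in> (\<lambda>p. fst p + snd p) -` A"
    using assms(2) by simp
  ultimately obtain N M where NM: "open N" "open M" "(a, b) \<in> N \<times> M"
      "N \<times> M \<subseteq> (\<lambda>p. fst p + snd p) -` A"
    by (rule open_prod_elim)
  show thesis
  proof (rule that[of N M])
    show "x + y \<in> A" if "x \<in> N" "y \<in> M" for x y
      using subsetD[OF NM(4), of "(x, y)"] that by simp
  qed (use NM(1-3) in simp_all)
qed

lemma nhds_zero_diff_subset:
  fixes V :: "'a::topological_group_add set"
  assumes "open V" "0 \<in> V"
  obtains N where "open N" "0 \<in> N" "\<And>x y. x \<in> N \<Longrightarrow> y \<in> N \<Longrightarrow> x - y \<in> V"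
proof -
  obtain N M where NM: "open N" "open M" "0 \<in> N" "0 \<in> M"
    and sum: "\<And>x y. x \<in> N \<Longrightarrow> y \<in> M \<Longrightarrow> x + y \<in> V"
    using add_nhds_elim[of V 0 0] assms by auto
  show thesis
  proof (rule that[of "N \<inter> uminus -` M"])
    show "open (N \<inter> uminus -` M)"
      using NM(1,2) by (intro open_Int open_vimage continuous_intros)
    show "0 \<in> N \<inter> uminus -` M"
      using NM(3,4) by simp
    show "x - y \<in> V" if "x \<in> N \<inter> uminus -` M" "y \<in> N \<inter> uminus -` M" for x y
      using sum[of x "- y"] that by simp
  qed
qed

lemma compact_add_nhds_subset:
  fixes K :: "'a::topological_monoid_add set"
  assumes "compact K" "open V" "K \<subseteq> V"
  obtains B where "open B" "0 \<in> B" "\<And>k b. k \<in> K \<Longrightarrow> b \<in> B \<Longrightarrow> k + b \<in> V"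
proof -
  have "\<exists>N M. open N \<and> open M \<and> k \<in> N \<and> 0 \<in> M \<and> (\<forall>x\<in>N. \<forall>y\<in>M. x + y \<in> V)" if "k \<in> K" for k
    using add_nhds_elim[of V k 0] assms(2,3) that by (metis add.right_neutral subsetD)
  then obtain N M where NM: "\<And>k. k \<in> K \<Longrightarrow>
      open (N k) \<and> open (M k) \<and> k \<in> N k \<and> 0 \<in> M k \<and> (\<forall>x\<in>N k. \<forall>y\<in>M k. x + y \<in> V)"
    by metis
  obtain T where T: "T \<subseteq> K" "finite T" "K \<subseteq> (\<Union>k\<in>T. N k)"
    using compactE_image[OF assms(1), of K N] NM by blast
  show thesis
  proof (rule that[of "\<Inter>k\<in>T. M k"])
    show "open (\<Inter>k\<in>T. M k)"
      using T NM by (intro open_INT) auto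
    show "0 \<in> (\<Inter>k\<in>T. M k)"
      using T NM by auto
    show "k + b \<in> V" if "k \<in> K" "b \<in> (\<Inter>k\<in>T. M k)" for k b
      using T NM that by blast
  qed
qed

section \<open>Subgroups, cosets and the quotient topology\<close>

definition add_subgroup :: "'a::ab_group_add set \<Rightarrow> bool" where
  "add_subgroup L \<longleftrightarrow> 0 \<in> L \<and> (\<forall>x\<in>L. \<forall>y\<in>L. x + y \<in> L \<and> - x \<in> L)"

lemma add_subgroup_zero: "add_subgroup L \<Longrightarrow> 0 \<in> L"
  unfolding add_subgroup_def by blast

lemma add_subgroup_add: "add_subgroup L \<Longrightarrow> x \<in> L \<Longrightarrow> y \<in> L \<Longrightarrow> x + y \<in> L"
  unfolding add_subgroup_def by metis

lemma add_subgroup_uminus: "add_subgroup L \<Longrightarrow> x \<in> L \<Longrightarrow> - x \<in> L"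
  unfolding add_subgroup_def by metis

lemma add_subgroup_diff: "add_subgroup L \<Longrightarrow> x \<in> L \<Longrightarrow> y \<in> L \<Longrightarrow> x - y \<in> L"
  unfolding diff_conv_add_uminus by (intro add_subgroup_add add_subgroup_uminus)

lemma coset_of_subset:
  assumes "add_subgroup L" "x - y \<in> L"
  shows "coset_of L x \<subseteq> coset_of L y"
proof
  fix z
  assume "z \<in> coset_of L x"
  then obtain l where l: "l \<in> L" "z = x + l"
    unfolding coset_of_def by blast
  have "(x - y) + l \<in> L"
    using add_subgroup_add[OF assms l(1)] .
  then show "z \<in> coset_of L y"
    unfolding coset_of_def by (rule rev_image_eqI) (simp add: l(2))
qed

lemma coset_of_eq_iff:
  assumes "add_subgroup L"
  shows "coset_of L x = coset_of L y \<longleftrightarrow> y - x \<in> L"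
proof
  assume eq: "coset_of L x = coset_of L y"
  have "y \<in> coset_of L y"
    unfolding coset_of_def using add_subgroup_zero[OF assms] by (rule rev_image_eqI) simp
  then have "y \<in> coset_of L x"
    by (simp add: eq)
  then obtain l where "l \<in> L" "y = x + l"
    unfolding coset_of_def by blast
  then show "y - x \<in> L"
    by simp
next
  assume "y - x \<in> L"
  moreover have "x - y \<in> L"
    using add_subgroup_uminus[OF assms \<open>y - x \<in> L\<close>] by simp
  ultimately show "coset_of L x = coset_of L y"
    by (intro equalityI coset_of_subset[OF assms])
qed

lemma openin_quotient_top:
  "openin (quotient_top L) S \<longleftrightarrow> S \<subseteq> range (coset_of L) \<and> open (coset_of L -` S)"
proof -
  have "istopology (\<lambda>S. S \<subseteq> range (coset_of L) \<and> open (coset_of L -` S))"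
    unfolding istopology_def by (auto simp: vimage_Union intro!: open_Int open_UN)
  then show ?thesis
    by (simp add: quotient_top_def vimage_def)
qed

lemma openin_quotient_top_image:
  fixes L :: "'a::topological_ab_group_add set"
  assumes "add_subgroup L" "open V"
  shows "openin (quotient_top L) (coset_of L ` V)"
proof -
  have "coset_of L -` coset_of L ` V = (\<Union>l\<in>L. (\<lambda>x. x + l) -` V)"
    by (force simp: coset_of_eq_iff[OF assms(1)] image_iff intro: bexI[of _ "_ + _"])
  moreover have "open (\<Union>l\<in>L. (\<lambda>x. x + l) -` V)"
    using assms(2) by (intro open_UN ballI open_vimage continuous_intros)
  ultimately show ?thesis
    by (auto simp: openin_quotient_top)
qed

lemma limitin_quotient_top_eventually_lift:
  fixes L :: "'a::topological_ab_group_add set"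
  assumes "add_subgroup L" "limitin (quotient_top L) (\<lambda>a. coset_of L (g a)) (coset_of L c) F"
    and "open V" "c \<in> V"
  shows "\<forall>\<^sub>F a in F. \<exists>p\<in>V. p - g a \<in> L"
proof -
  have "\<forall>\<^sub>F a in F. coset_of L (g a) \<in> coset_of L ` V"
    using assms(2) openin_quotient_top_image[OF assms(1,3)] assms(4) unfolding limitin_def by blast
  then show ?thesis
    by (rule eventually_mono) (auto simp: coset_of_eq_iff[OF assms(1)])
qed

section \<open>Point sets and vague convergence\<close>

lemma point_set_subset: "point_set \<Gamma> \<Longrightarrow> \<Delta> \<subseteq> \<Gamma> \<Longrightarrow> point_set \<Delta>"
  unfolding point_set_def by (meson Int_mono finite_subset order_refl)

lemma point_set_translation:
  fixes \<Gamma> :: "'a::topological_group_add set"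
  assumes "point_set \<Gamma>"
  shows "point_set ((\<lambda>x. c + x) ` \<Gamma>)"
  unfolding point_set_def
proof (intro allI impI)
  fix K :: "'a set"
  assume "compact K"
  then have "compact ((\<lambda>x. - c + x) ` K)"
    by (intro compact_continuous_image continuous_intros)
  then have "finite (\<Gamma> \<inter> (\<lambda>x. - c + x) ` K)"
    using assms unfolding point_set_def by blast
  moreover have "(\<lambda>x. c + x) ` \<Gamma> \<inter> K \<subseteq> (\<lambda>x. c + x) ` (\<Gamma> \<inter> (\<lambda>x. - c + x) ` K)"
    by (force simp: add.assoc[symmetric])
  ultimately show "finite ((\<lambda>x. c + x) ` \<Gamma> \<inter> K)"
    by (meson finite_imageI finite_subset)
qed

lemma point_set_model_set:
  fixes L :: "('g::topological_space \<times> 'h::topological_space) set"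
  assumes "point_set L" "compact W"
  shows "point_set (model_set L W)"
  unfolding point_set_def
proof (intro allI impI)
  fix K :: "'g set"
  assume "compact K"
  then have "finite (L \<inter> (K \<times> W))"
    using assms compact_Times unfolding point_set_def by blast
  moreover have "model_set L W \<inter> K \<subseteq> fst ` (L \<inter> (K \<times> W))"
    unfolding model_set_def by force
  ultimately show "finite (model_set L W \<inter> K)"
    by (meson finite_imageI finite_subset)
qed

lemma discrete_add_subgroup_point_set:
  fixes L :: "'a::topological_ab_group_add set"
  assumes L: "add_subgroup L" and "open V" "V \<inter> L = {0}"
  shows "point_set L"
  unfolding point_set_def
proof (intro allI impI)
  fix K :: "'a set"
  assume "compact K"
  have "0 \<in> V"
    using assms(3) by blast
  then obtain N where N: "open N" "0 \<in> N" "\<And>x y. x \<in> N \<Longrightarrow> y \<in> N \<Longrightarrow> x - y \<in> V"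
    using nhds_zero_diff_subset[OF assms(2)] by blast
  define C where "C k = (\<lambda>x. x - k) -` N" for k
  have "open (C k)" for k
    unfolding C_def using N(1) by (intro open_vimage continuous_intros)
  moreover have "K \<subseteq> (\<Union>k\<in>K. C k)"
    using N(2) by (auto simp: C_def)
  ultimately obtain T where T: "finite T" "K \<subseteq> (\<Union>k\<in>T. C k)"
    by (rule compactE_image[OF \<open>compact K\<close>])
  have at_most_one: "L \<inter> C k \<subseteq> {l}" if l: "l \<in> L \<inter> C k" for k l
  proof
    fix m
    assume m: "m \<in> L \<inter> C k"
    have "(m - k) - (l - k) \<in> V"
      using N(3) l m unfolding C_def by blast
    moreover have "m - l \<in> L"
      using add_subgroup_diff[OF L] l m by simp
    ultimately have "m - l \<in> V \<inter> L"
      by simp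
    then show "m \<in> {l}"
      using assms(3) by simp
  qed
  have "finite (L \<inter> C k)" for k
  proof (cases "L \<inter> C k = {}")
    case False
    then obtain l where "l \<in> L \<inter> C k"
      by blast
    then show ?thesis
      using finite_subset[OF at_most_one] by blast
  qed simp
  then have "finite (\<Union>k\<in>T. L \<inter> C k)"
    using T(1) by blast
  moreover have "L \<inter> K \<subseteq> (\<Union>k\<in>T. L \<inter> C k)"
    using T(2) by blast
  ultimately show "finite (L \<inter> K)"
    by (rule finite_subset[rotated])
qed

lemma t2_imp_Hausdorff_space: "Hausdorff_space (euclidean :: 'a::t2_space topology)"
  using hausdorff by (fastforce simp: Hausdorff_space_def disjnt_def)

lemma locally_compact_compact_nhd:
  fixes x :: "'a::t2_space"
  assumes "locally_compact_space (euclidean :: 'a topology)" "open W" "x \<in> W"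
  obtains U K where "open U" "compact K" "x \<in> U" "U \<subseteq> K" "K \<subseteq> W"
proof -
  have "neighbourhood_base_of (compactin euclidean) (euclidean :: 'a topology)"
    using assms(1) locally_compact_space_neighbourhood_base t2_imp_Hausdorff_space by blast
  then show thesis
    using assms(2,3) that unfolding neighbourhood_base_of by (simp add: compactin_euclidean_iff) blast
qed

lemma point_set_imp_closed:
  fixes \<Gamma> :: "'a::t2_space set"
  assumes "locally_compact_space (euclidean :: 'a topology)" "point_set \<Gamma>"
  shows "closed \<Gamma>"
  unfolding closed_def
proof (subst open_subopen, intro ballI)
  fix y
  assume y: "y \<in> - \<Gamma>"
  obtain U K where UK: "open U" "compact K" "y \<in> U" "U \<subseteq> K"
    by (rule locally_compact_compact_nhd[OF assms(1) open_UNIV UNIV_I]) (rule that)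
  have "finite (\<Gamma> \<inter> K)"
    using assms(2) UK(2) by (simp add: point_set_def)
  then have "open (U - \<Gamma> \<inter> K)"
    using UK(1) by (intro open_Diff finite_imp_closed)
  moreover have "y \<in> U - \<Gamma> \<inter> K" "U - \<Gamma> \<inter> K \<subseteq> - \<Gamma>"
    using UK(3,4) y by auto
  ultimately show "\<exists>T. open T \<and> y \<in> T \<and> T \<subseteq> - \<Gamma>"
    by blast
qed

lemma point_set_finite_support:
  assumes "point_set \<Gamma>" "f \<in> Cc"
  shows "finite {x \<in> \<Gamma>. f x \<noteq> 0}"
proof -
  have "compact (closure {x. f x \<noteq> 0})"
    using assms(2) by (simp add: Cc_def)
  then have "finite (\<Gamma> \<inter> closure {x. f x \<noteq> 0})"
    using assms(1) by (simp add: point_set_def)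
  moreover have "{x \<in> \<Gamma>. f x \<noteq> 0} \<subseteq> \<Gamma> \<inter> closure {x. f x \<noteq> 0}"
    using closure_subset[of "{x. f x \<noteq> 0}"] by blast
  ultimately show ?thesis
    by (rule finite_subset[rotated])
qed

lemma locally_compact_bump:
  fixes x :: "'a::t2_space"
  assumes "locally_compact_space (euclidean :: 'a topology)" "open N" "x \<in> N"
  obtains g :: "'a \<Rightarrow> real"
  where "continuous_on UNIV g" "(\<lambda>z. complex_of_real (g z)) \<in> Cc" "g x = 1"
    "\<And>z. 0 \<le> g z" "\<And>z. g z \<noteq> 0 \<Longrightarrow> z \<in> N"
proof -
  obtain U K where UK: "open U" "compact K" "x \<in> U" "U \<subseteq> K" "K \<subseteq> N"
    using locally_compact_compact_nhd[OF assms] by blast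
  have "completely_regular_space (euclidean :: 'a topology)"
    using locally_compact_regular_imp_completely_regular_space assms(1) t2_imp_Hausdorff_space
    by blast
  moreover have "closedin euclidean (- U) \<and> x \<in> topspace euclidean - (- U)"
    using UK(1,3) by (simp add: closed_Compl)
  ultimately obtain h where h: "continuous_map euclidean (top_of_set {0..1}) h" "h x = (0::real)"
    "h ` (- U) \<subseteq> {1}"
    unfolding completely_regular_space_def by blast
  have h_cont: "continuous_on UNIV h"
    using h(1) by (simp add: continuous_map_in_subtopology)
  have h_le: "h z \<le> 1" for z
    using h(1) by (auto simp: continuous_map_in_subtopology)
  define g where "g z = 1 - h z" for z
  have supp: "{z. g z \<noteq> 0} \<subseteq> K"
    using h(3) UK(4) by (force simp: g_def)
  have g_cont: "continuous_on UNIV g"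
    unfolding g_def by (intro continuous_intros h_cont)
  have "closure {z. g z \<noteq> 0} \<subseteq> K"
    using supp UK(2) by (simp add: closure_minimal compact_imp_closed)
  then have "compact (closure {z. g z \<noteq> 0})"
    using compact_Int_closed[OF UK(2) closed_closure, of "{z. g z \<noteq> 0}"] by (simp add: Int_absorb1)
  then have "(\<lambda>z. complex_of_real (g z)) \<in> Cc"
    unfolding Cc_def by (auto intro!: continuous_intros g_cont)
  moreover have "g z \<noteq> 0 \<Longrightarrow> z \<in> N" for z
    using supp UK(5) by blast
  ultimately show thesis
    using that g_cont h(2) h_le by (simp add: g_def)
qed

lemma norm_comb_int_of_real_ge:
  assumes "finite {x \<in> \<Gamma>. g x \<noteq> 0}" "\<And>x. 0 \<le> g x" "y \<in> \<Gamma>"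
  shows "g y \<le> norm (comb_int \<Gamma> (\<lambda>x. complex_of_real (g x)))"
proof -
  let ?S = "{x \<in> \<Gamma>. g x \<noteq> 0}"
  have "comb_int \<Gamma> (\<lambda>x. complex_of_real (g x)) = complex_of_real (\<Sum>x\<in>?S. g x)"
    by (simp add: comb_int_def)
  moreover have "0 \<le> (\<Sum>x\<in>?S. g x)"
    using assms(2) by (simp add: sum_nonneg)
  moreover have "g y \<le> (\<Sum>x\<in>?S. g x)"
    using assms by (cases "g y = 0") (auto intro: sum_nonneg member_le_sum)
  ultimately show ?thesis
    by (simp only: norm_of_real abs_of_nonneg)
qed

lemma vague_conv_eventually_meets:
  fixes \<Gamma>' :: "'a::t2_space set"
  assumes lc: "locally_compact_space (euclidean :: 'a topology)"
    and "point_set \<Gamma>'" "vague_conv \<Gamma>s \<Gamma>' F" "y \<in> \<Gamma>'" "open N" "y \<in> N"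
  shows "\<forall>\<^sub>F a in F. \<Gamma>s a \<inter> N \<noteq> {}"
proof -
  obtain g where g: "continuous_on UNIV g" "(\<lambda>z. complex_of_real (g z)) \<in> Cc" "g y = 1"
    "\<And>z. 0 \<le> g z" "\<And>z. g z \<noteq> 0 \<Longrightarrow> z \<in> N"
    using locally_compact_bump[OF lc assms(5,6)] by blast
  let ?f = "\<lambda>z. complex_of_real (g z)"
  have "1 \<le> norm (comb_int \<Gamma>' ?f)"
    using norm_comb_int_of_real_ge[of \<Gamma>' g y] point_set_finite_support[OF assms(2) g(2)] g(3,4) assms(4)
    by simp
  then have "\<forall>\<^sub>F a in F. comb_int (\<Gamma>s a) ?f \<noteq> 0"
    using assms(3) g(2) unfolding vague_conv_def by (auto intro: tendsto_imp_eventually_ne)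
  then show ?thesis
  proof (rule eventually_mono)
    fix a
    assume "comb_int (\<Gamma>s a) ?f \<noteq> 0"
    then have "{z \<in> \<Gamma>s a. ?f z \<noteq> 0} \<noteq> {}"
      unfolding comb_int_def by (metis sum.empty)
    then obtain z where "z \<in> \<Gamma>s a" "g z \<noteq> 0"
      by auto
    then show "\<Gamma>s a \<inter> N \<noteq> {}"
      using g(5) by blast
  qed
qed

lemma vague_conv_eventually_avoids:
  fixes \<Gamma>' :: "'a::t2_space set"
  assumes lc: "locally_compact_space (euclidean :: 'a topology)"
    and "\<And>a. point_set (\<Gamma>s a)" "point_set \<Gamma>'" "vague_conv \<Gamma>s \<Gamma>' F" "y \<notin> \<Gamma>'"
  obtains N where "open N" "y \<in> N" "\<forall>\<^sub>F a in F. \<Gamma>s a \<inter> N = {}"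
proof -
  have "open (- \<Gamma>')"
    using point_set_imp_closed[OF lc assms(3)] by auto
  moreover have "y \<in> - \<Gamma>'"
    using assms(5) by simp
  ultimately obtain g where g: "continuous_on UNIV g" "(\<lambda>z. complex_of_real (g z)) \<in> Cc" "g y = 1"
    "\<And>z. 0 \<le> g z" "\<And>z. g z \<noteq> 0 \<Longrightarrow> z \<in> - \<Gamma>'"
    using locally_compact_bump[OF lc] by blast
  let ?f = "\<lambda>z. complex_of_real (g z)"
  have "{x \<in> \<Gamma>'. ?f x \<noteq> 0} = {}"
    using g(5) by auto
  then have "comb_int \<Gamma>' ?f = 0"
    unfolding comb_int_def by (simp only: sum.empty)
  moreover have "((\<lambda>a. comb_int (\<Gamma>s a) ?f) \<longlongrightarrow> comb_int \<Gamma>' ?f) F"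
    using assms(4) g(2) unfolding vague_conv_def by blast
  ultimately have lim0: "((\<lambda>a. comb_int (\<Gamma>s a) ?f) \<longlongrightarrow> 0) F"
    by simp
  have small: "\<forall>\<^sub>F a in F. norm (comb_int (\<Gamma>s a) ?f) < 1/2"
    using tendstoD[OF lim0, of "1/2"] by (simp add: dist_norm)
  show thesis
  proof (rule that)
    show "open {z. 1/2 < g z}"
      using g(1) by (intro open_Collect_less continuous_intros)
    show "y \<in> {z. 1/2 < g z}"
      using g(3) by simp
    show "\<forall>\<^sub>F a in F. \<Gamma>s a \<inter> {z. 1/2 < g z} = {}"
      using small
    proof (rule eventually_mono)
      fix a
      assume a: "norm (comb_int (\<Gamma>s a) ?f) < 1/2"
      show "\<Gamma>s a \<inter> {z. 1/2 < g z} = {}"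
        using norm_comb_int_of_real_ge[OF _ g(4)] point_set_finite_support[OF assms(2) g(2)] a
        by fastforce
    qed
  qed
qed

section \<open>Model sets\<close>

(* For compact neighbourhoods C1 of z and C2 of 0, only finitely many points of L lie in
   C1 \<times> (W + C2); A and B are shrunk until they exclude all of them. *)
lemma model_set_window_margin:
  fixes L :: "('g::{topological_ab_group_add,t2_space} \<times> 'h::{topological_ab_group_add,t2_space}) set"
  assumes lcG: "locally_compact_space (euclidean :: 'g topology)"
    and lcH: "locally_compact_space (euclidean :: 'h topology)"
    and "point_set L" "compact W" "z \<notin> model_set L W"
  obtains A B where "open A" "z \<in> A" "open B" "0 \<in> B"
    "\<And>g w b. g \<in> A \<Longrightarrow> w \<in> W \<Longrightarrow> b \<in> B \<Longrightarrow> (g, w + b) \<notin> L"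
proof -
  obtain A0 C1 where AC1: "open A0" "compact C1" "z \<in> A0" "A0 \<subseteq> C1"
    by (rule locally_compact_compact_nhd[OF lcG open_UNIV UNIV_I]) (rule that)
  obtain B0 C2 :: "'h set" where BC2: "open B0" "compact C2" "0 \<in> B0" "B0 \<subseteq> C2"
    by (rule locally_compact_compact_nhd[OF lcH open_UNIV UNIV_I]) (rule that)
  define P where "P = L \<inter> (C1 \<times> (\<lambda>(w, b). w + b) ` (W \<times> C2))"
  have "compact ((\<lambda>(w, b). w + b) ` (W \<times> C2))"
    using assms(4) BC2(2) unfolding case_prod_unfold
    by (intro compact_continuous_image compact_Times continuous_intros)
  then have "finite P"
    using assms(3) AC1(2) unfolding P_def point_set_def by (simp add: compact_Times)
  define Q where "Q = snd ` (P \<inter> ({z} \<times> UNIV))"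
  have "finite Q"
    unfolding Q_def using \<open>finite P\<close> by simp
  have "W \<subseteq> - Q"
  proof
    fix w
    assume "w \<in> W"
    show "w \<in> - Q"
    proof
      assume "w \<in> Q"
      then have "(z, w) \<in> L"
        unfolding Q_def P_def by auto
      then have "z \<in> model_set L W"
        unfolding model_set_def using \<open>w \<in> W\<close> by (intro image_eqI[of _ fst "(z, w)"]) auto
      then show False
        using assms(5) by contradiction
    qed
  qed
  moreover have "open (- Q)"
    using \<open>finite Q\<close> by (simp add: finite_imp_closed open_Compl)
  ultimately obtain B1 where B1: "open B1" "0 \<in> B1" "\<And>w b. w \<in> W \<Longrightarrow> b \<in> B1 \<Longrightarrow> w + b \<in> - Q"
    using compact_add_nhds_subset[OF assms(4)] by blast
  show thesis
  proof (rule that[of "A0 - (fst ` P - {z})" "B0 \<inter> B1"])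
    show "open (A0 - (fst ` P - {z}))"
      using AC1(1) \<open>finite P\<close> by (intro open_Diff finite_imp_closed) simp_all
    show "z \<in> A0 - (fst ` P - {z})"
      using AC1(3) by simp
    show "open (B0 \<inter> B1)"
      using BC2(1) B1(1) by (rule open_Int)
    show "0 \<in> B0 \<inter> B1"
      using BC2(3) B1(2) by simp
    fix g w b
    assume g: "g \<in> A0 - (fst ` P - {z})" and w: "w \<in> W" and b: "b \<in> B0 \<inter> B1"
    show "(g, w + b) \<notin> L"
    proof
      assume "(g, w + b) \<in> L"
      moreover have "w + b \<in> (\<lambda>(w, b). w + b) ` (W \<times> C2)"
        using w b BC2(4) by (intro image_eqI[of _ _ "(w, b)"]) auto
      ultimately have gP: "(g, w + b) \<in> P"
        using g AC1(4) unfolding P_def by auto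
      then have "g = z"
        using g by (auto intro: image_eqI[of _ fst "(g, w + b)"])
      then have "w + b \<in> Q"
        unfolding Q_def using gP by (intro image_eqI[of _ snd "(g, w + b)"]) auto
      then show False
        using B1(3) w b by blast
    qed
  qed
qed

lemma model_set_translates_eventually_meet:
  fixes L :: "('g::topological_ab_group_add \<times> 'h::topological_ab_group_add) set"
  assumes L: "add_subgroup L" and "open U" "model_set L U \<subseteq> \<Gamma>"
    and lim: "limitin (quotient_top L) (\<lambda>a. coset_of L (- sa a, 0)) (coset_of L (s, t)) F"
    and "x \<in> model_set L ((\<lambda>u. u + t) ` U)" "open N" "x - s \<in> N"
  shows "\<forall>\<^sub>F a in F. (\<lambda>y. sa a + y) ` \<Gamma> \<inter> N \<noteq> {}"
proof -
  obtain h where xh: "(x, h) \<in> L" "h - t \<in> U"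
    using assms(5) unfolding model_set_def by force
  define V where "V = {p. x - fst p \<in> N \<and> h - snd p \<in> U}"
  have "open V"
    unfolding V_def using assms(2,6)
    by (intro open_Collect_conj open_vimage[unfolded vimage_def] continuous_intros) simp_all
  moreover have "(s, t) \<in> V"
    unfolding V_def using xh(2) assms(7) by simp
  ultimately have "\<forall>\<^sub>F a in F. \<exists>p\<in>V. p - (- sa a, 0) \<in> L"
    by (rule limitin_quotient_top_eventually_lift[OF L lim])
  then show ?thesis
  proof (rule eventually_mono)
    fix a
    assume "\<exists>p\<in>V. p - (- sa a, 0) \<in> L"
    then obtain p1 p2 where p: "x - p1 \<in> N" "h - p2 \<in> U" "(p1 + sa a, p2) \<in> L"
      unfolding V_def by auto
    have "(x, h) - (p1 + sa a, p2) \<in> L"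
      using add_subgroup_diff[OF L xh(1) p(3)] .
    then have "x - p1 - sa a \<in> model_set L U"
      using p(2) unfolding model_set_def by (force simp: algebra_simps)
    then have "x - p1 \<in> (\<lambda>y. sa a + y) ` \<Gamma>"
      using assms(3) by (force simp: algebra_simps)
    then show "(\<lambda>y. sa a + y) ` \<Gamma> \<inter> N \<noteq> {}"
      using p(1) by blast
  qed
qed

lemma model_set_translates_eventually_avoid:
  fixes L :: "('g::{topological_ab_group_add,t2_space} \<times> 'h::{topological_ab_group_add,t2_space}) set"
  assumes lcG: "locally_compact_space (euclidean :: 'g topology)"
    and lcH: "locally_compact_space (euclidean :: 'h topology)"
    and L: "add_subgroup L" "point_set L" and "compact W" "\<Gamma> \<subseteq> model_set L W"
    and lim: "limitin (quotient_top L) (\<lambda>a. coset_of L (- sa a, 0)) (coset_of L (s, t)) F"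
    and "z \<notin> model_set L ((\<lambda>w. w + t) ` W)"
  obtains N where "open N" "z - s \<in> N" "\<forall>\<^sub>F a in F. (\<lambda>y. sa a + y) ` \<Gamma> \<inter> N = {}"
proof -
  have Wt: "compact ((\<lambda>w. w + t) ` W)"
    using assms(5) by (intro compact_continuous_image continuous_intros)
  obtain A B where A: "open A" "z \<in> A" and B: "open B" "0 \<in> B"
    and margin: "\<And>g w b. g \<in> A \<Longrightarrow> w \<in> (\<lambda>w. w + t) ` W \<Longrightarrow> b \<in> B \<Longrightarrow> (g, w + b) \<notin> L"
    by (rule model_set_window_margin[OF lcG lcH L(2) Wt assms(8)]) (rule that)
  have zs: "(z - s) + s \<in> A"
    using A(2) by simp
  obtain N M where N: "open N" and M: "open M" and "z - s \<in> N" "s \<in> M"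
    and NM: "\<And>y p. y \<in> N \<Longrightarrow> p \<in> M \<Longrightarrow> y + p \<in> A"
    by (rule add_nhds_elim[OF A(1) zs]) (rule that)
  define V where "V = M \<times> (\<lambda>h. h - t) -` B"
  have "open V"
    unfolding V_def using M B(1) by (intro open_Times open_vimage continuous_intros)
  moreover have "(s, t) \<in> V"
    unfolding V_def using \<open>s \<in> M\<close> B(2) by simp
  ultimately have "\<forall>\<^sub>F a in F. \<exists>p\<in>V. p - (- sa a, 0) \<in> L"
    by (rule limitin_quotient_top_eventually_lift[OF L(1) lim])
  then have "\<forall>\<^sub>F a in F. (\<lambda>y. sa a + y) ` \<Gamma> \<inter> N = {}"
  proof (rule eventually_mono)
    fix a
    assume "\<exists>p\<in>V. p - (- sa a, 0) \<in> L"
    then obtain p1 p2 where p: "p1 \<in> M" "p2 - t \<in> B" "(p1 + sa a, p2) \<in> L"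
      unfolding V_def by auto
    show "(\<lambda>y. sa a + y) ` \<Gamma> \<inter> N = {}"
    proof (rule ccontr)
      assume "(\<lambda>y. sa a + y) ` \<Gamma> \<inter> N \<noteq> {}"
      then obtain \<gamma> where \<gamma>: "\<gamma> \<in> \<Gamma>" "sa a + \<gamma> \<in> N"
        by blast
      then have "\<gamma> \<in> model_set L W"
        using assms(6) by blast
      then obtain w where w: "(\<gamma>, w) \<in> L" "w \<in> W"
        unfolding model_set_def by auto
      have "((sa a + \<gamma>) + p1, (w + t) + (p2 - t)) \<in> L"
        using add_subgroup_add[OF L(1) w(1) p(3)] by (simp add: algebra_simps)
      moreover have "w + t \<in> (\<lambda>w. w + t) ` W"
        using w(2) by (rule imageI)
      ultimately show False
        using margin[OF NM[OF \<gamma>(2) p(1)] _ p(2)] by blast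
    qed
  qed
  then show thesis
    by (rule that[OF N \<open>z - s \<in> N\<close>])
qed

lemma cut_and_project_add_subgroup:
  assumes "cut_and_project L"
  shows "add_subgroup L"
  using assms unfolding cut_and_project_def add_subgroup_def by (elim conjE) (rule conjI)

lemma cut_and_project_point_set:
  assumes "cut_and_project L"
  shows "point_set L"
proof -
  have "\<forall>x\<in>L. \<exists>V. open V \<and> V \<inter> L = {x}"
    using assms unfolding cut_and_project_def by (elim conjE)
  then obtain V where "open V" "V \<inter> L = {0}"
    using add_subgroup_zero[OF cut_and_project_add_subgroup[OF assms]] by blast
  then show ?thesis
    by (rule discrete_add_subgroup_point_set[OF cut_and_project_add_subgroup[OF assms]])
qed

lemma model_set_shifted_window_subset_limit:
  fixes L :: "('g::{topological_ab_group_add,t2_space} \<times> 'h::topological_ab_group_add) set"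
  assumes lcG: "locally_compact_space (euclidean :: 'g topology)"
    and L: "add_subgroup L" and "open U" "model_set L U \<subseteq> \<Gamma>"
    and "F \<noteq> bot" "\<And>a. point_set ((\<lambda>x. sa a + x) ` \<Gamma>)" "point_set \<Gamma>'"
    and "vague_conv (\<lambda>a. (\<lambda>x. sa a + x) ` \<Gamma>) \<Gamma>' F"
    and lim: "limitin (quotient_top L) (\<lambda>a. coset_of L (- sa a, 0)) (coset_of L (s, t)) F"
  shows "model_set L ((\<lambda>u. u + t) ` U) \<subseteq> (\<lambda>x. s + x) ` \<Gamma>'"
proof
  fix x
  assume x: "x \<in> model_set L ((\<lambda>u. u + t) ` U)"
  have "x - s \<in> \<Gamma>'"
  proof (rule ccontr)
    assume "x - s \<notin> \<Gamma>'"
    then obtain N where N: "open N" "x - s \<in> N"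
      and avoid: "\<forall>\<^sub>F a in F. (\<lambda>y. sa a + y) ` \<Gamma> \<inter> N = {}"
      by (rule vague_conv_eventually_avoids[OF lcG assms(6-8)])
    have meet: "\<forall>\<^sub>F a in F. (\<lambda>y. sa a + y) ` \<Gamma> \<inter> N \<noteq> {}"
      by (rule model_set_translates_eventually_meet[OF L assms(3,4) lim x N])
    show False
      using eventually_happens'[OF assms(5) eventually_conj[OF avoid meet]] by blast
  qed
  then show "x \<in> (\<lambda>x. s + x) ` \<Gamma>'"
    by (rule rev_image_eqI) simp
qed

lemma limit_subset_model_set_shifted_window:
  fixes L :: "('g::{topological_ab_group_add,t2_space} \<times> 'h::{topological_ab_group_add,t2_space}) set"
  assumes lcG: "locally_compact_space (euclidean :: 'g topology)"
    and lcH: "locally_compact_space (euclidean :: 'h topology)"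
    and L: "add_subgroup L" "point_set L" and "compact W" "\<Gamma> \<subseteq> model_set L W"
    and "F \<noteq> bot" "point_set \<Gamma>'" "vague_conv (\<lambda>a. (\<lambda>x. sa a + x) ` \<Gamma>) \<Gamma>' F"
    and lim: "limitin (quotient_top L) (\<lambda>a. coset_of L (- sa a, 0)) (coset_of L (s, t)) F"
  shows "(\<lambda>x. s + x) ` \<Gamma>' \<subseteq> model_set L ((\<lambda>w. w + t) ` W)"
proof
  fix z
  assume "z \<in> (\<lambda>x. s + x) ` \<Gamma>'"
  then have z: "z - s \<in> \<Gamma>'"
    by force
  show "z \<in> model_set L ((\<lambda>w. w + t) ` W)"
  proof (rule ccontr)
    assume "z \<notin> model_set L ((\<lambda>w. w + t) ` W)"
    then obtain N where N: "open N" "z - s \<in> N"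
      and avoid: "\<forall>\<^sub>F a in F. (\<lambda>y. sa a + y) ` \<Gamma> \<inter> N = {}"
      by (rule model_set_translates_eventually_avoid[OF lcG lcH L assms(5,6) lim])
    have meet: "\<forall>\<^sub>F a in F. (\<lambda>y. sa a + y) ` \<Gamma> \<inter> N \<noteq> {}"
      by (rule vague_conv_eventually_meets[OF lcG assms(8,9) z N])
    show False
      using eventually_happens'[OF assms(7) eventually_conj[OF avoid meet]] by blast
  qed
qed

theorem lemma4p1:
  fixes L :: "('g::{topological_ab_group_add,t2_space} \<times> 'h::{topological_ab_group_add,t2_space}) set"
    and U W :: "'h set" and \<Gamma> \<Gamma>' :: "'g set"
    and sa :: "'i \<Rightarrow> 'g" and F :: "'i filter" and s :: 'g and t :: 'h
  assumes "cut_and_project L"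
    and "open U" and "U \<noteq> {}" and "compact W" and "U \<subseteq> W"
    and "model_set L U \<subseteq> \<Gamma>" and "\<Gamma> \<subseteq> model_set L W"
    and "F \<noteq> bot"
    and "point_set \<Gamma>'"
    and "vague_conv (\<lambda>a. (\<lambda>x. sa a + x) ` \<Gamma>) \<Gamma>' F"
    and "limitin (quotient_top L) (\<lambda>a. coset_of L (- sa a, 0)) (coset_of L (s, t)) F"
  shows "model_set L ((\<lambda>u. u + t) ` U) \<subseteq> (\<lambda>x. s + x) ` \<Gamma>'
       \<and> (\<lambda>x. s + x) ` \<Gamma>' \<subseteq> model_set L ((\<lambda>w. w + t) ` W)"
proof
  have lcG: "locally_compact_space (euclidean :: 'g topology)"
    and lcH: "locally_compact_space (euclidean :: 'h topology)"
    using assms(1) by (simp_all add: cut_and_project_def)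
  note L = cut_and_project_add_subgroup[OF assms(1)] cut_and_project_point_set[OF assms(1)]
  have "point_set ((\<lambda>x. sa a + x) ` \<Gamma>)" for a
    using point_set_translation point_set_subset[OF point_set_model_set[OF L(2) assms(4)] assms(7)]
    by blast
  then show "model_set L ((\<lambda>u. u + t) ` U) \<subseteq> (\<lambda>x. s + x) ` \<Gamma>'"
    by (rule model_set_shifted_window_subset_limit[OF lcG L(1) assms(2,6,8) _ assms(9-11)])
  show "(\<lambda>x. s + x) ` \<Gamma>' \<subseteq> model_set L ((\<lambda>w. w + t) ` W)"
    by (rule limit_subset_model_set_shifted_window[OF lcG lcH L assms(4,7-11)])
qed

end
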